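(* For every integer $n\ge1$, the following identity of rational functions holds: \[ R_n(z)=(-1)^n\frac{(n!)^2}{((2n)!)^2}\cdot\frac{z^{2n}}{(z-1)^{2n+2}}\cdot\frac{1}{Q_n(w)\,Q_n(-w)},\qquad w=\frac{z}{z-1}. \]
   Context: For $n\ge1$ let $y_n(z)=\sum_{k=0}^{n}\frac{(n+k)!}{(n-k)!\,k!}\left(\frac{z}{2}\right)^k$ be the $n$-th Bessel polynomial and let $\alpha_{n1},\dots,\alpha_{nn}$ be its zeros (they are simple). Put $a_{nk}=1-\alpha_{nk}/2$ and $b_{nk}=1+\alpha_{nk}/2$ for $k=1,\dots,n$. Define \[ R_n(z)=\frac{1}{(z-1)^2}-\sum_{k=1}^n\frac{a_{nk}}{1-a_{nk}z}+\sum_{k=1}^n\frac{b_{nk}}{1-b_{nk}z}, \] and the polynomial $Q_n(z)=\frac{n!}{(2n)!}\sum_{k=0}^{n}\frac{(2n-k)!}{(n-k)!}\frac{z^k}{k!}$ (so $Q_n(0)=1$). *)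

theory Defs
  imports "HOL-Computational_Algebra.Polynomial" Complex_Main
begin

definition bessel_poly :: "nat \<Rightarrow> complex poly" where
  "bessel_poly n = (\<Sum>k\<le>n. monom (of_nat (fact (n + k)) /
       (of_nat (fact (n - k)) * of_nat (fact k) * 2 ^ k)) k)"

text \<open>The (simple) zeros of y_n.\<close>
definition bessel_zeros :: "nat \<Rightarrow> complex set" where
  "bessel_zeros n = {\<alpha>. poly (bessel_poly n) \<alpha> = 0}"

definition R_fun :: "nat \<Rightarrow> complex \<Rightarrow> complex" where
  "R_fun n z = 1 / (z - 1)^2
     - (\<Sum>\<alpha>\<in>bessel_zeros n. (1 - \<alpha>/2) / (1 - (1 - \<alpha>/2) * z))
     + (\<Sum>\<alpha>\<in>bessel_zeros n. (1 + \<alpha>/2) / (1 - (1 + \<alpha>/2) * z))"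

definition Q_fun :: "nat \<Rightarrow> complex \<Rightarrow> complex" where
  "Q_fun n z = of_nat (fact n) / of_nat (fact (2*n)) *
     (\<Sum>k\<le>n. of_nat (fact (2*n - k)) / of_nat (fact (n - k)) * z ^ k / of_nat (fact k))"

end

theory Submission
  imports Defs "HOL-Computational_Algebra.Fundamental_Theorem_Algebra"
begin

text \<open>
  The Bessel polynomial \<open>y = y\<^sub>n\<close> satisfies \<open>x\<^sup>2 y'' + 2(x + 1) y' = n(n + 1) y\<close>, and \<open>y(-x)\<close>
  satisfies the same equation with \<open>x + 1\<close> replaced by \<open>x - 1\<close>. A Wronskian-type combination of
  the two solutions is therefore constant, which gives
  \<open>x\<^sup>2 (y'(x) y(-x) + y(x) y'(-x)) + 2 y(x) y(-x) = 2\<close>.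
  In particular the zeros \<open>a\<close> of \<open>y\<close> are simple, and adding the logarithmic derivatives of
  \<open>y(x)\<close> and \<open>y(-x)\<close> expresses \<open>\<Sum>\<^sub>a 1/(t - a) - 1/(t + a)\<close> through \<open>P(t) = y(t) y(-t)\<close>.
  For \<open>t = 2(z - 1)/z = 2/w\<close> the pair of terms of \<open>R\<^sub>n(z)\<close> belonging to \<open>a\<close> equals
  \<open>2/z\<^sup>2 (1/(t - a) - 1/(t + a))\<close>, so \<open>R\<^sub>n(z) = 1/((z - 1)\<^sup>2 P(t))\<close>; finally
  \<open>Q\<^sub>n(w) = n!/(2n)! w\<^sup>n y(2/w)\<close> turns \<open>P(t)\<close> into \<open>Q\<^sub>n(w) Q\<^sub>n(-w)\<close>.
  At \<open>z = 0\<close> both sides vanish because the zeros of \<open>y\<^sub>n\<close> sum to \<open>-1\<close>.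
\<close>

definition bessel_coeff :: "nat \<Rightarrow> nat \<Rightarrow> complex" where
  "bessel_coeff n k = of_nat (fact (n + k)) / (of_nat (fact (n - k)) * of_nat (fact k) * 2 ^ k)"

lemma coeff_bessel_poly: "coeff (bessel_poly n) k = (if k \<le> n then bessel_coeff n k else 0)"
  unfolding bessel_poly_def bessel_coeff_def by (simp add: coeff_sum coeff_monom)

lemma poly_bessel_poly: "poly (bessel_poly n) x = (\<Sum>k\<le>n. bessel_coeff n k * x ^ k)"
  unfolding bessel_poly_def bessel_coeff_def by (simp add: poly_sum poly_monom)

lemma bessel_coeff_0 [simp]: "bessel_coeff n 0 = 1"
  by (simp add: bessel_coeff_def)

lemma poly_bessel_poly_0 [simp]: "poly (bessel_poly n) 0 = 1"
  by (simp add: poly_0_coeff_0 coeff_bessel_poly)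

lemma bessel_coeff_Suc:
  assumes "k < n"
  shows "2 * of_nat (Suc k) * bessel_coeff n (Suc k) = of_nat (n + k + 1) * of_nat (n - k) * bessel_coeff n k"
proof -
  have "n - k = Suc (n - Suc k)" using assms by simp
  then have fact_diff: "fact (n - k) = (of_nat (n - k) * fact (n - Suc k) :: complex)"
    by (metis fact_Suc)
  have "of_nat (n - k) \<noteq> (0 :: complex)" "of_nat (Suc k) \<noteq> (0 :: complex)"
    using assms by (simp_all del: of_nat_Suc)
  then show ?thesis
    unfolding bessel_coeff_def of_nat_fact fact_diff
    by (simp add: field_simps del: of_nat_Suc)
qed

definition bessel_operator :: "complex \<Rightarrow> nat \<Rightarrow> complex poly \<Rightarrow> complex poly" where
  "bessel_operator s n p =
     [:0, 0, 1:] * pderiv (pderiv p) + [:2 * s, 2:] * pderiv p - smult (of_nat (n * (n + 1))) p"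

lemma coeff_bessel_operator:
  "coeff (bessel_operator s n p) k =
     of_nat k * (of_nat k - 1) * coeff p k + 2 * s * of_nat (Suc k) * coeff p (Suc k)
     + 2 * of_nat k * coeff p k - of_nat (n * (n + 1)) * coeff p k"
proof (cases k)
  case 0
  then show ?thesis by (simp add: bessel_operator_def coeff_pderiv)
next
  case (Suc i)
  then show ?thesis
    by (cases i) (simp_all add: bessel_operator_def coeff_pderiv algebra_simps)
qed

lemma bessel_operator_bessel_poly: "bessel_operator 1 n (bessel_poly n) = 0"
proof (rule poly_eqI)
  fix k
  consider "k < n" | "k = n" | "k > n" by linarith
  then show "coeff (bessel_operator 1 n (bessel_poly n)) k = coeff 0 k"
  proof cases
    case 1
    then have "2 * of_nat (Suc k) * bessel_coeff n (Suc k) =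
        of_nat (n + k + 1) * (of_nat n - of_nat k) * bessel_coeff n k"
      using bessel_coeff_Suc[OF 1] by (simp add: of_nat_diff)
    with 1 show ?thesis
      by (simp add: coeff_bessel_operator coeff_bessel_poly algebra_simps)
  qed (simp_all add: coeff_bessel_operator coeff_bessel_poly algebra_simps)
qed

lemma bessel_operator_reflect:
  "pcompose (bessel_operator s n p) [:0, -1:] = bessel_operator (- s) n (pcompose p [:0, -1:])"
  by (simp add: bessel_operator_def pcompose_diff pcompose_add pcompose_mult pcompose_smult
      pderiv_pcompose pderiv_pCons pderiv_minus pcompose_pCons algebra_simps)

lemma pderiv_bessel_wronskian:
  "pderiv ([:0, 0, 1:] * (pderiv p * q - p * pderiv q) + smult 2 (p * q)) =
     q * bessel_operator 1 n p - p * bessel_operator (-1) n q"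
proof -
  define X :: "complex poly" where "X = [:0, 1:]"
  have X: "[:0, 0, 1:] = X * X" "\<And>s. [:2 * s, 2:] = [:2 * s:] + 2 * X" "pderiv X = 1"
    by (simp_all add: X_def mult_pCons_left numeral_poly pderiv_pCons)
  show ?thesis
    unfolding bessel_operator_def X(1,2)
    by (simp add: pderiv_mult pderiv_add pderiv_diff pderiv_smult X(3) algebra_simps smult_add_right)
qed

lemma bessel_reflection_identity:
  fixes n :: nat and x :: complex
  defines "y \<equiv> bessel_poly n"
  shows "x\<^sup>2 * (poly (pderiv y) x * poly y (- x) + poly y x * poly (pderiv y) (- x))
           + 2 * poly y x * poly y (- x) = 2"
proof -
  define v where "v = pcompose y [:0, -1:]"
  define G where "G = [:0, 0, 1:] * (pderiv y * v - y * pderiv v) + smult 2 (y * v)"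
  have "bessel_operator (-1) n v = 0"
    unfolding v_def y_def bessel_operator_reflect[symmetric] bessel_operator_bessel_poly by simp
  then have "pderiv G = 0"
    unfolding G_def pderiv_bessel_wronskian[of _ _ n] y_def by (simp add: bessel_operator_bessel_poly)
  then obtain c where G: "G = [:c:]" using pderiv_iszero by blast
  have poly_G: "poly G x = x\<^sup>2 * (poly (pderiv y) x * poly y (- x) + poly y x * poly (pderiv y) (- x))
           + 2 * poly y x * poly y (- x)" for x
    unfolding G_def v_def
    by (simp add: poly_pcompose pderiv_pcompose pderiv_pCons power2_eq_square algebra_simps)
  have "c = 2" using poly_G[of 0] by (simp add: G y_def)
  then show ?thesis using poly_G[of x] by (simp add: G)
qed

lemma bessel_poly_root:
  assumes "poly (bessel_poly n) a = 0"
  shows "a\<^sup>2 * poly (pderiv (bessel_poly n)) a * poly (bessel_poly n) (- a) = 2"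
  using bessel_reflection_identity[where n = n and x = a] assms by (simp add: algebra_simps)

lemma bessel_poly_nonzero: "bessel_poly n \<noteq> 0"
  using poly_bessel_poly_0[of n] by (metis poly_0 zero_neq_one)

lemma degree_bessel_poly: "degree (bessel_poly n) = n"
proof (rule antisym)
  show "degree (bessel_poly n) \<le> n"
    by (rule degree_le) (simp add: coeff_bessel_poly)
  show "n \<le> degree (bessel_poly n)"
    by (rule le_degree) (simp add: coeff_bessel_poly bessel_coeff_def)
qed

lemma rsquarefree_bessel_poly: "rsquarefree (bessel_poly n)"
  unfolding rsquarefree_roots using bessel_poly_root by fastforce

lemma finite_bessel_zeros: "finite (bessel_zeros n)"
  unfolding bessel_zeros_def by (rule poly_roots_finite[OF bessel_poly_nonzero])

lemma bessel_poly_factorization: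
  "bessel_poly n = smult (lead_coeff (bessel_poly n)) (\<Prod>a\<in>bessel_zeros n. [:- a, 1:])"
  using complex_poly_decompose_rsquarefree[OF rsquarefree_bessel_poly]
  unfolding bessel_zeros_def by simp

lemma degree_prod_linear_factors:
  fixes S :: "'a :: idom set"
  assumes "finite S"
  shows "degree (\<Prod>s\<in>S. [:- s, 1:]) = card S"
  using assms by (subst degree_prod_eq_sum_degree) auto

lemma card_bessel_zeros: "card (bessel_zeros n) = n"
  using arg_cong[OF bessel_poly_factorization, of degree, of n]
  by (simp add: degree_bessel_poly degree_prod_linear_factors finite_bessel_zeros
      coeff_bessel_poly bessel_coeff_def)

lemma lead_coeff_prod_linear_factors:
  fixes S :: "'a :: idom set"
  assumes "finite S"
  shows "coeff (\<Prod>s\<in>S. [:- s, 1:]) (card S) = 1"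
  using lead_coeff_prod[of "\<lambda>s. [:- s, 1:]" S] by (simp add: degree_prod_linear_factors assms)

lemma coeff_prod_linear_factors_sum:
  fixes S :: "'a :: idom set"
  assumes "finite S" "S \<noteq> {}"
  shows "coeff (\<Prod>s\<in>S. [:- s, 1:]) (card S - 1) = - (\<Sum>s\<in>S. s)"
  using assms
proof (induction S rule: finite_ne_induct)
  case (insert a F)
  let ?P = "\<Prod>s\<in>F. [:- s, 1:]"
  obtain k where k: "card F = Suc k" using insert by (metis card_0_eq not0_implies_Suc)
  have "(\<Prod>s\<in>insert a F. [:- s, 1:]) = smult (- a) ?P + pCons 0 ?P"
    using insert by (simp add: mult_pCons_left)
  then show ?case
    using insert lead_coeff_prod_linear_factors[OF insert(1)] k by simp
qed simp

lemma sum_bessel_zeros: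
  assumes "n \<ge> 1"
  shows "(\<Sum>a\<in>bessel_zeros n. a) = -1"
proof -
  have "bessel_zeros n \<noteq> {}"
    using card_bessel_zeros[of n] assms by auto
  then have "coeff (\<Prod>a\<in>bessel_zeros n. [:- a, 1:]) (n - 1) = - (\<Sum>a\<in>bessel_zeros n. a)"
    using coeff_prod_linear_factors_sum[OF finite_bessel_zeros] by (simp add: card_bessel_zeros)
  then have "coeff (bessel_poly n) (n - 1) = bessel_coeff n n * - (\<Sum>a\<in>bessel_zeros n. a)"
    by (subst bessel_poly_factorization) (simp add: degree_bessel_poly coeff_bessel_poly)
  moreover have "bessel_coeff n (n - 1) = bessel_coeff n n"
    using bessel_coeff_Suc[of "n - 1" n] assms by simp
  ultimately have "bessel_coeff n n * ((\<Sum>a\<in>bessel_zeros n. a) + 1) = 0"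
    using assms by (simp add: coeff_bessel_poly neg_eq_iff_add_eq_0 algebra_simps)
  moreover have "bessel_coeff n n \<noteq> 0"
    by (simp add: bessel_coeff_def)
  ultimately show ?thesis
    by (simp add: eq_neg_iff_add_eq_0)
qed

lemma pderiv_div_eq_sum_roots:
  fixes p :: "complex poly"
  assumes "rsquarefree p" and "poly p t \<noteq> 0"
  shows "poly (pderiv p) t / poly p t = (\<Sum>r\<in>{r. poly p r = 0}. 1 / (t - r))"
proof -
  define S where "S = {r. poly p r = 0}"
  have fin: "finite S" and "t \<notin> S"
    using assms poly_roots_finite[of p] by (auto simp: S_def rsquarefree_def)
  define c where "c = lead_coeff p"
  have "c \<noteq> 0"
    using assms(1) by (simp add: c_def rsquarefree_def)
  have p: "p = smult c (\<Prod>s\<in>S. [:- s, 1:])"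
    using complex_poly_decompose_rsquarefree[OF assms(1)] by (simp add: S_def c_def)
  have "poly (pderiv p) t / poly p t =
      (\<Sum>r\<in>S. (\<Prod>s\<in>S - {r}. t - s)) / (\<Prod>s\<in>S. t - s)"
    using \<open>c \<noteq> 0\<close> by (subst (1 2) p) (simp add: pderiv_smult pderiv_prod poly_sum poly_prod pderiv_pCons)
  also have "\<dots> = (\<Sum>r\<in>S. 1 / (t - r))"
    unfolding sum_divide_distrib
  proof (rule sum.cong[OF refl])
    fix r assume "r \<in> S"
    then have "(\<Prod>s\<in>S. t - s) = (t - r) * (\<Prod>s\<in>S - {r}. t - s)"
      by (rule prod.remove[OF fin])
    moreover have "(\<Prod>s\<in>S - {r}. t - s) \<noteq> 0"
      using fin \<open>t \<notin> S\<close> by auto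
    ultimately show "(\<Prod>s\<in>S - {r}. t - s) / (\<Prod>s\<in>S. t - s) = 1 / (t - r)"
      by simp
  qed
  finally show ?thesis by (simp add: S_def)
qed

lemma sum_bessel_zeros_reflected_fractions:
  fixes n :: nat and t :: complex
  defines "y \<equiv> bessel_poly n"
  assumes "t \<noteq> 0" and "poly y t \<noteq> 0" and "poly y (- t) \<noteq> 0"
  shows "(\<Sum>a\<in>bessel_zeros n. 1 / (t - a) - 1 / (t + a)) =
           2 * (1 - poly y t * poly y (- t)) / (t\<^sup>2 * (poly y t * poly y (- t)))"
proof -
  have log_deriv: "poly (pderiv y) x / poly y x = (\<Sum>a\<in>bessel_zeros n. 1 / (x - a))"
    if "poly y x \<noteq> 0" for x
    using pderiv_div_eq_sum_roots[OF rsquarefree_bessel_poly that[unfolded y_def]]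
    by (simp add: y_def bessel_zeros_def)
  have "(\<Sum>a\<in>bessel_zeros n. 1 / (t - a) - 1 / (t + a)) =
      poly (pderiv y) t / poly y t + poly (pderiv y) (- t) / poly y (- t)"
    using log_deriv[of t] log_deriv[of "- t"] assms
    by (simp add: sum_subtractf sum_negf[symmetric] minus_divide_right)
  also have "\<dots> = (poly (pderiv y) t * poly y (- t) + poly y t * poly (pderiv y) (- t))
                    / (poly y t * poly y (- t))"
    using assms by (simp add: field_simps)
  also have "poly (pderiv y) t * poly y (- t) + poly y t * poly (pderiv y) (- t) =
      2 * (1 - poly y t * poly y (- t)) / t\<^sup>2"
    using bessel_reflection_identity[where n = n and x = t] assms
    by (simp add: y_def field_simps)
  finally show ?thesis by simp
qed

lemma R_fun_0:
  assumes "n \<ge> 1"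
  shows "R_fun n 0 = 0"
  using sum_bessel_zeros[OF assms]
  by (simp add: R_fun_def sum.distrib sum_subtractf sum_divide_distrib[symmetric])

lemma reflected_fraction_pair:
  fixes a z t :: complex
  assumes "z \<noteq> 0" and "t = 2 * (z - 1) / z"
    and "1 - (1 - a/2) * z \<noteq> 0" and "1 - (1 + a/2) * z \<noteq> 0"
  shows "(1 + a/2) / (1 - (1 + a/2) * z) - (1 - a/2) / (1 - (1 - a/2) * z) =
           2 / z\<^sup>2 * (1 / (t - a) - 1 / (t + a))"
proof -
  obtain d1 d2 where d1: "d1 = 1 - (1 - a/2) * z" and d2: "d2 = 1 - (1 + a/2) * z"
    by blast
  have "d1 \<noteq> 0" "d2 \<noteq> 0"
    using assms(3,4) by (simp_all add: d1 d2)
  have t_minus: "t - a = - 2 * d1 / z" and t_plus: "t + a = - 2 * d2 / z"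
    using assms(1) unfolding assms(2) by (simp_all add: d1 d2 field_simps)
  have geometric: "u / (1 - u * z) = (1 / (1 - u * z) - 1) / z" if "1 - u * z \<noteq> 0" for u
    using that assms(1) by (simp add: field_simps)
  then have frac: "(1 + a/2) / d2 = (1 / d2 - 1) / z" "(1 - a/2) / d1 = (1 / d1 - 1) / z"
    using assms(3,4) unfolding d1 d2 by blast+
  show ?thesis
    unfolding d1[symmetric] d2[symmetric] t_minus t_plus frac
    using \<open>d1 \<noteq> 0\<close> \<open>d2 \<noteq> 0\<close> assms(1) by (simp add: field_simps power2_eq_square)
qed

lemma R_fun_eq_reflected_bessel:
  fixes n :: nat and z :: complex
  defines "t \<equiv> 2 * (z - 1) / z"
  assumes "z \<noteq> 0" and "z \<noteq> 1"
    and zeros: "\<forall>\<alpha>\<in>bessel_zeros n. 1 - (1 - \<alpha>/2) * z \<noteq> 0 \<and> 1 - (1 + \<alpha>/2) * z \<noteq> 0"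
  shows "R_fun n z = 1 / ((z - 1)\<^sup>2 * (poly (bessel_poly n) t * poly (bessel_poly n) (- t)))"
proof -
  have "1 - (1 - t/2) * z = 0" "1 - (1 + (- t)/2) * z = 0"
    using \<open>z \<noteq> 0\<close> by (simp_all add: t_def field_simps)
  then have "t \<notin> bessel_zeros n" "- t \<notin> bessel_zeros n"
    using zeros by blast+
  then have nonzero: "poly (bessel_poly n) t \<noteq> 0" "poly (bessel_poly n) (- t) \<noteq> 0"
    by (simp_all add: bessel_zeros_def)
  have "t \<noteq> 0"
    using assms by (simp add: t_def)
  have "R_fun n z = 1 / (z - 1)\<^sup>2 +
      (\<Sum>a\<in>bessel_zeros n. 2 / z\<^sup>2 * (1 / (t - a) - 1 / (t + a)))"
    unfolding R_fun_def add_diff_eq[symmetric] diff_add_eq sum_subtractf[symmetric]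
    using zeros \<open>z \<noteq> 0\<close>
    by (intro arg_cong2[where f = "(+)"] refl sum.cong reflected_fraction_pair) (auto simp: t_def)
  also have "\<dots> = 1 / (z - 1)\<^sup>2 + 2 / z\<^sup>2 *
      (2 * (1 - poly (bessel_poly n) t * poly (bessel_poly n) (- t)) /
        (t\<^sup>2 * (poly (bessel_poly n) t * poly (bessel_poly n) (- t))))"
    by (simp only: sum_distrib_left[symmetric] sum_bessel_zeros_reflected_fractions[OF \<open>t \<noteq> 0\<close> nonzero])
  also have "t\<^sup>2 = 4 * (z - 1)\<^sup>2 / z\<^sup>2"
    by (simp add: t_def power_divide power2_eq_square algebra_simps)
  also have "1 / (z - 1)\<^sup>2 + 2 / z\<^sup>2 *
      (2 * (1 - poly (bessel_poly n) t * poly (bessel_poly n) (- t)) /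
        (4 * (z - 1)\<^sup>2 / z\<^sup>2 * (poly (bessel_poly n) t * poly (bessel_poly n) (- t)))) =
      1 / ((z - 1)\<^sup>2 * (poly (bessel_poly n) t * poly (bessel_poly n) (- t)))"
    using \<open>z \<noteq> 0\<close> \<open>z \<noteq> 1\<close> nonzero by (simp add: field_simps)
  finally show ?thesis .
qed

lemma Q_fun_eq_bessel_poly:
  assumes "w \<noteq> 0"
  shows "Q_fun n w = of_nat (fact n) / of_nat (fact (2 * n)) * (w ^ n * poly (bessel_poly n) (2 / w))"
proof -
  have "w ^ n * poly (bessel_poly n) (2 / w) =
      (\<Sum>k\<le>n. of_nat (fact (n + k)) / (of_nat (fact (n - k)) * of_nat (fact k)) * w ^ (n - k))"
    unfolding poly_bessel_poly sum_distrib_left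
  proof (rule sum.cong[OF refl])
    fix k assume "k \<in> {..n}"
    then have "w ^ n = w ^ (n - k) * w ^ k"
      by (simp add: power_add[symmetric])
    then show "w ^ n * (bessel_coeff n k * (2 / w) ^ k) =
        of_nat (fact (n + k)) / (of_nat (fact (n - k)) * of_nat (fact k)) * w ^ (n - k)"
      using assms by (simp add: bessel_coeff_def power_divide field_simps)
  qed
  also have "\<dots> = (\<Sum>k\<le>n. of_nat (fact (2 * n - k)) / of_nat (fact (n - k)) * w ^ k / of_nat (fact k))"
    by (rule sum.reindex_bij_witness[of _ "\<lambda>k. n - k" "\<lambda>k. n - k"]) (auto simp: mult_2)
  finally show ?thesis
    by (simp add: Q_fun_def)
qed

lemma Q_fun_reflected_product:
  fixes n :: nat and z :: complex
  defines "t \<equiv> 2 * (z - 1) / z"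
  assumes "z \<noteq> 0" and "z \<noteq> 1"
  shows "Q_fun n (z / (z - 1)) * Q_fun n (- (z / (z - 1))) =
    (-1) ^ n * (of_nat (fact n) / of_nat (fact (2 * n)))\<^sup>2 * (z ^ (2 * n) / (z - 1) ^ (2 * n))
      * (poly (bessel_poly n) t * poly (bessel_poly n) (- t))"
proof -
  define w where "w = z / (z - 1)"
  define K :: complex where "K = of_nat (fact n) / of_nat (fact (2 * n))"
  have "w \<noteq> 0" "2 / w = t" "2 / (- w) = - t"
    using assms by (simp_all add: w_def t_def)
  then have "Q_fun n w = K * (w ^ n * poly (bessel_poly n) t)"
    and "Q_fun n (- w) = K * ((-1) ^ n * w ^ n * poly (bessel_poly n) (- t))"
    using Q_fun_eq_bessel_poly[of w n] Q_fun_eq_bessel_poly[of "- w" n]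
    by (simp_all only: K_def power_minus[of w] neg_equal_0_iff_equal not_False_eq_True)
  then have "Q_fun n w * Q_fun n (- w) =
      (-1) ^ n * K\<^sup>2 * (w ^ n * w ^ n) * (poly (bessel_poly n) t * poly (bessel_poly n) (- t))"
    by (simp only: power2_eq_square ac_simps)
  also have "w ^ n * w ^ n = z ^ (2 * n) / (z - 1) ^ (2 * n)"
    by (simp add: w_def power_divide mult_2 power_add)
  finally show ?thesis
    by (simp only: w_def K_def)
qed

theorem mainTheorem7:
  fixes n :: nat and z :: complex
  assumes "n \<ge> 1"
    and "z \<noteq> 1"
    and "\<forall>\<alpha>\<in>bessel_zeros n. 1 - (1 - \<alpha>/2) * z \<noteq> 0 \<and> 1 - (1 + \<alpha>/2) * z \<noteq> 0"
    and "Q_fun n (z / (z - 1)) * Q_fun n (- (z / (z - 1))) \<noteq> 0"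
  shows "R_fun n z =
    (-1) ^ n * (of_nat (fact n))^2 / (of_nat (fact (2*n)))^2
    * (z ^ (2*n) / (z - 1) ^ (2*n + 2))
    * (1 / (Q_fun n (z / (z - 1)) * Q_fun n (- (z / (z - 1)))))"
proof (cases "z = 0")
  case True
  then show ?thesis
    using assms(1) by (simp add: R_fun_0)
next
  case False
  define t where "t = 2 * (z - 1) / z"
  define P where "P = poly (bessel_poly n) t * poly (bessel_poly n) (- t)"
  define K :: complex where "K = (-1) ^ n * (of_nat (fact n) / of_nat (fact (2 * n)))\<^sup>2"
  have Q: "Q_fun n (z / (z - 1)) * Q_fun n (- (z / (z - 1))) = K * (z ^ (2 * n) / (z - 1) ^ (2 * n)) * P"
    using Q_fun_reflected_product[OF False assms(2)] by (simp only: K_def P_def t_def)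
  have R: "R_fun n z = 1 / ((z - 1)\<^sup>2 * P)"
    using R_fun_eq_reflected_bessel[OF False assms(2,3)] by (simp only: P_def t_def)
  have "P \<noteq> 0" "K \<noteq> 0" "z - 1 \<noteq> 0"
    using assms(2,4) unfolding Q by (auto simp: K_def)
  have "(-1) ^ n * (of_nat (fact n))\<^sup>2 / (of_nat (fact (2 * n)))\<^sup>2 = K"
    by (simp add: K_def power_divide)
  moreover have "(z - 1) ^ (2 * n + 2) = (z - 1) ^ (2 * n) * (z - 1)\<^sup>2"
    by (simp only: power_add)
  ultimately show ?thesis
    unfolding Q R using False \<open>P \<noteq> 0\<close> \<open>K \<noteq> 0\<close> \<open>z - 1 \<noteq> 0\<close>
    by (simp add: field_simps)
qed

end
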